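(* Let $S,T\subseteq\mathrm{Var}$ be disjoint finite sets, $\mu_1\in\mathcal{D}(\mathrm{Mem}[S])$ and $\mu_2\in\mathcal{D}(\mathrm{Mem}[T])$. Let $\mathcal{S}$ be a partition of a subset of $S$ and $\mathcal{T}$ a partition of a subset of $T$. If $\mu_1$ is $\mathcal{S}$-PNA and $\mu_2$ is $\mathcal{T}$-PNA, then every $\mu\in\mu_1\otimes\mu_2$ is $(\mathcal{S}\cup\mathcal{T})$-PNA. Consequently $\mu_1\otimes\mu_2\subseteq\mu_1\oplus\mu_2$ for all $\mu_1,\mu_2\in X$.
   Context: Fix a set $\mathrm{Var}$ of variables; values are real numbers. For finite $S\subseteq\mathrm{Var}$, $\mathrm{Mem}[S]$ is the set of maps $S\to\mathbb{R}$, ordered pointwise; $p_A(m)$ is restriction. $\mathcal{D}(Y)$ denotes countably supported probability distributions on $Y$; for $\mu\in\mathcal{D}(\mathrm{Mem}[S])$, $\mathrm{dom}(\mu)=S$ and $\pi_A\mu$ is the marginal on $A$. $X=\bigcup_{S\text{ finite}}\mathcal{D}(\mathrm{Mem}[S])$. For $\mu_1\in\mathcal{D}(\mathrm{Mem}[S])$, $\mu_2\in\mathcal{D}(\mathrm{Mem}[T])$, the independent product $\mu_1\otimes\mu_2$ is $\emptyset$ if $S\cap T\ne\emptyset$, and otherwise the singleton set of the $\mu\in\mathcal{D}(\mathrm{Mem}[S\cup T])$ with $\mu(x)=\mu_1(p_Sx)\mu_2(p_Tx)$. A partition is a set of pairwise disjoint nonempty sets; $\mathcal{T}$ coarsens $\mathcal{S}$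 if $\bigcup\mathcal{T}=\bigcup\mathcal{S}$ and each element of $\mathcal{T}$ is a union of a subfamily of $\mathcal{S}$. For a partition $\mathcal{S}$ with $\bigcup\mathcal{S}\subseteq\mathrm{dom}(\mu)$, $\mu$ is $\mathcal{S}$-PNA if for every $\mathcal{T}$ coarsening $\mathcal{S}$ and every family $(f_A:\mathrm{Mem}[A]\to[0,\infty))_{A\in\mathcal{T}}$ all non-decreasing or all non-increasing, $\mathbb{E}_{m\sim\mu}[\prod_Af_A(p_Am)]\le\prod_A\mathbb{E}_{m\sim\mu}[f_A(p_Am)]$. $\mu_1\oplus\mu_2$ is empty if $S\cap T\neq\emptyset$ and otherwise is the set of $\mu\in\mathcal{D}(\mathrm{Mem}[S\cup T])$ with $\pi_S\mu=\mu_1$, $\pi_T\mu=\mu_2$ such that $\mu$ is $(\mathcal{S}\cup\mathcal{T})$-PNA for all partitions $\mathcal{S}$ of a subset of $S$ and $\mathcal{T}$ of a subset of $T$ with $\mu_1$ $\mathcal{S}$-PNA and $\mu_2$ $\mathcal{T}$-PNA. *)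

theory Defs
  imports "HOL-Probability.Probability_Mass_Function"
begin

(* Mem[S] (maps S -> real) is represented by total functions 'v => real that
   vanish outside S; the pointwise order on Mem[S] is the order on functions. *)
definition Mem :: "'v set \<Rightarrow> ('v \<Rightarrow> real) set" where
  "Mem S = {m. \<forall>x. x \<notin> S \<longrightarrow> m x = 0}"

definition proj :: "'v set \<Rightarrow> ('v \<Rightarrow> real) \<Rightarrow> ('v \<Rightarrow> real)" where
  "proj A m = (\<lambda>x. if x \<in> A then m x else 0)"

(* An element of X: a pair (dom mu, mu) with mu a countably supported
   probability distribution (pmf) on Mem[dom mu]. *)
definition Xdist :: "('v set \<times> ('v \<Rightarrow> real) pmf) set" where
  "Xdist = {(S, p). finite S \<and> set_pmf p \<subseteq> Mem S}"

definition is_partition :: "'v set set \<Rightarrow> bool" where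
  "is_partition P \<longleftrightarrow> (\<forall>A\<in>P. A \<noteq> {}) \<and> (\<forall>A\<in>P. \<forall>B\<in>P. A \<noteq> B \<longrightarrow> A \<inter> B = {})"

definition coarsens :: "'v set set \<Rightarrow> 'v set set \<Rightarrow> bool" where
  "coarsens TT SS \<longleftrightarrow> is_partition TT \<and> \<Union>TT = \<Union>SS \<and>
     (\<forall>A\<in>TT. \<exists>F\<subseteq>SS. A = \<Union>F)"

definition nondec_on :: "'v set \<Rightarrow> (('v \<Rightarrow> real) \<Rightarrow> real) \<Rightarrow> bool" where
  "nondec_on A f \<longleftrightarrow> (\<forall>m\<in>Mem A. 0 \<le> f m) \<and>
     (\<forall>m\<in>Mem A. \<forall>m'\<in>Mem A. m \<le> m' \<longrightarrow> f m \<le> f m')"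

definition noninc_on :: "'v set \<Rightarrow> (('v \<Rightarrow> real) \<Rightarrow> real) \<Rightarrow> bool" where
  "noninc_on A f \<longleftrightarrow> (\<forall>m\<in>Mem A. 0 \<le> f m) \<and>
     (\<forall>m\<in>Mem A. \<forall>m'\<in>Mem A. m \<le> m' \<longrightarrow> f m' \<le> f m)"

(* mu (with domain S) is SS-PNA; expectations of nonnegative functions are
   nonnegative Lebesgue integrals (values in [0,\<infinity>]). *)
definition PNA :: "'v set \<Rightarrow> ('v \<Rightarrow> real) pmf \<Rightarrow> 'v set set \<Rightarrow> bool" where
  "PNA S p SS \<longleftrightarrow> is_partition SS \<and> \<Union>SS \<subseteq> S \<and>
     (\<forall>TT f. coarsens TT SS \<and>
        ((\<forall>A\<in>TT. nondec_on A (f A)) \<or> (\<forall>A\<in>TT. noninc_on A (f A))) \<longrightarrow>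
        (\<integral>\<^sup>+ m. (\<Prod>A\<in>TT. ennreal (f A (proj A m))) \<partial>measure_pmf p)
          \<le> (\<Prod>A\<in>TT. \<integral>\<^sup>+ m. ennreal (f A (proj A m)) \<partial>measure_pmf p))"

definition indep_prod ::
  "'v set \<times> ('v \<Rightarrow> real) pmf \<Rightarrow> 'v set \<times> ('v \<Rightarrow> real) pmf \<Rightarrow> ('v set \<times> ('v \<Rightarrow> real) pmf) set" where
  "indep_prod mu1 mu2 = (let S = fst mu1; T = fst mu2 in
     if S \<inter> T \<noteq> {} then {} else
     {(S \<union> T, p) | p. set_pmf p \<subseteq> Mem (S \<union> T) \<and>
        (\<forall>x\<in>Mem (S \<union> T). pmf p x = pmf (snd mu1) (proj S x) * pmf (snd mu2) (proj T x))})"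

definition oplus ::
  "'v set \<times> ('v \<Rightarrow> real) pmf \<Rightarrow> 'v set \<times> ('v \<Rightarrow> real) pmf \<Rightarrow> ('v set \<times> ('v \<Rightarrow> real) pmf) set" where
  "oplus mu1 mu2 = (let S = fst mu1; T = fst mu2 in
     if S \<inter> T \<noteq> {} then {} else
     {(S \<union> T, p) | p. set_pmf p \<subseteq> Mem (S \<union> T) \<and>
        map_pmf (proj S) p = snd mu1 \<and> map_pmf (proj T) p = snd mu2 \<and>
        (\<forall>SS TT. is_partition SS \<and> \<Union>SS \<subseteq> S \<and> is_partition TT \<and> \<Union>TT \<subseteq> T \<and>
           PNA S (snd mu1) SS \<and> PNA T (snd mu2) TT \<longrightarrow> PNA (S \<union> T) p (SS \<union> TT))})"

end

theory Submission
  imports Defs "HOL-Library.Function_Algebras"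
begin

text \<open>
  An element of \<open>\<mu>\<^sub>1 \<otimes> \<mu>\<^sub>2\<close> is the law of \<open>a + b\<close> for independent \<open>a \<sim> \<mu>\<^sub>1\<close> and
  \<open>b \<sim> \<mu>\<^sub>2\<close>: memories vanish off their domains, so memories on disjoint domains are glued by
  pointwise addition. Fix a coarsening \<open>U\<close> of \<open>SS \<union> TT\<close> and functions \<open>f\<^sub>C\<close>, all
  non-decreasing or all non-increasing. Each block \<open>C\<close> meets \<open>S\<close> and \<open>T\<close> in unions of blocks
  of \<open>SS\<close> and \<open>TT\<close>. For fixed \<open>a\<close>, the factor \<open>b \<mapsto> f\<^sub>C (p\<^sub>C (a + b))\<close> depends
  only on the coordinates in \<open>C \<inter> T\<close>, so the PNA property of \<open>\<mu>\<^sub>2\<close> bounds the inner integral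
  by \<open>\<Prod>\<^sub>C H\<^sub>C a\<close>, where \<open>H\<^sub>C a = E\<^sub>b f\<^sub>C (p\<^sub>C (a + b))\<close>. Each \<open>H\<^sub>C\<close> depends only
  on \<open>C \<inter> S\<close> and is monotone in the same direction, so the PNA property of \<open>\<mu>\<^sub>1\<close> bounds
  \<open>E\<^sub>a \<Prod>\<^sub>C H\<^sub>C a\<close> by \<open>\<Prod>\<^sub>C E\<^sub>a H\<^sub>C a\<close>, the right-hand side. Blocks not meeting \<open>S\<close>
  (resp. \<open>T\<close>) only contribute constant factors. As PNA speaks about real-valued functions,
  \<open>H\<^sub>C\<close> has to be finite; hence the \<open>f\<^sub>C\<close> are first truncated at \<open>n\<close>, and monotone
  convergence removes the truncation.
\<close>

lemma Mem_mono: "A \<subseteq> B \<Longrightarrow> Mem A \<subseteq> Mem B"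
  unfolding Mem_def by auto

lemma proj_in_Mem: "proj A m \<in> Mem A"
  unfolding proj_def Mem_def by auto

lemma proj_mono: "m \<le> m' \<Longrightarrow> proj A m \<le> proj A m'"
  unfolding proj_def le_fun_def by auto

lemma proj_empty [simp]: "proj {} m = 0"
  unfolding proj_def by auto

lemma nondec_on_iff: "nondec_on A f \<longleftrightarrow> (\<forall>m\<in>Mem A. 0 \<le> f m) \<and> mono_on (Mem A) f"
  unfolding nondec_on_def monotone_on_def by auto

lemma noninc_on_iff: "noninc_on A f \<longleftrightarrow> (\<forall>m\<in>Mem A. 0 \<le> f m) \<and> antimono_on (Mem A) f"
  unfolding noninc_on_def monotone_on_def by auto

lemma PNA_prod_le:
  assumes "PNA S p SS" and "coarsens TT SS"
    and "(\<forall>A\<in>TT. nondec_on A (f A)) \<or> (\<forall>A\<in>TT. noninc_on A (f A))"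
  shows "(\<integral>\<^sup>+ m. (\<Prod>A\<in>TT. ennreal (f A (proj A m))) \<partial>measure_pmf p)
           \<le> (\<Prod>A\<in>TT. \<integral>\<^sup>+ m. ennreal (f A (proj A m)) \<partial>measure_pmf p)"
  using assms unfolding PNA_def by fast

lemma is_partition_traces:
  assumes part: "is_partition U" and meets: "\<forall>C\<in>U. C \<inter> S \<noteq> {}"
  shows "is_partition ((\<lambda>C. C \<inter> S) ` U)"
  unfolding is_partition_def
proof (intro conjI ballI impI)
  fix A assume "A \<in> (\<lambda>C. C \<inter> S) ` U"
  then show "A \<noteq> {}" using meets by blast
next
  fix A B assume "A \<in> (\<lambda>C. C \<inter> S) ` U" "B \<in> (\<lambda>C. C \<inter> S) ` U" "A \<noteq> B"
  then obtain C C' where "C \<in> U" "C' \<in> U" "C \<noteq> C'" "A = C \<inter> S" "B = C' \<inter> S" by blast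
  moreover have "C \<inter> C' = {}" using part \<open>C \<in> U\<close> \<open>C' \<in> U\<close> \<open>C \<noteq> C'\<close>
    unfolding is_partition_def by blast
  ultimately show "A \<inter> B = {}" by blast
qed

lemma coarsens_traces:
  assumes "is_partition U" and "\<forall>C\<in>U. C \<inter> S \<noteq> {}"
    and "\<Union>U \<inter> S = \<Union>SS" and "\<forall>C\<in>U. \<exists>F\<subseteq>SS. C \<inter> S = \<Union>F"
  shows "coarsens ((\<lambda>C. C \<inter> S) ` U) SS"
  unfolding coarsens_def
proof (intro conjI)
  show "is_partition ((\<lambda>C. C \<inter> S) ` U)" using assms(1,2) by (rule is_partition_traces)
  show "\<Union>((\<lambda>C. C \<inter> S) ` U) = \<Union>SS" using assms(3) by blast
  show "\<forall>A\<in>(\<lambda>C. C \<inter> S) ` U. \<exists>F\<subseteq>SS. A = \<Union>F" using assms(4) by blast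
qed

lemma inj_on_traces:
  assumes part: "is_partition U" and meets: "\<forall>C\<in>U. C \<inter> S \<noteq> {}"
  shows "inj_on (\<lambda>C. C \<inter> S) U"
proof (rule inj_onI)
  fix C C' assume "C \<in> U" "C' \<in> U" "C \<inter> S = C' \<inter> S"
  then have "C \<inter> C' \<noteq> {}" using meets by blast
  then show "C = C'" using part \<open>C \<in> U\<close> \<open>C' \<in> U\<close> unfolding is_partition_def by blast
qed

lemma mono_direction_restrict:
  assumes mono: "(\<forall>C\<in>U. mono_on M (\<phi> C)) \<or> (\<forall>C\<in>U. antimono_on M (\<phi> C))"
    and nonneg: "\<And>C m. C \<in> U \<Longrightarrow> m \<in> M \<Longrightarrow> 0 \<le> \<phi> C m"
    and restrict: "\<And>D. D \<in> V \<Longrightarrow> h D \<in> U \<and> Mem D \<subseteq> M"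
  shows "(\<forall>D\<in>V. nondec_on D (\<phi> (h D))) \<or> (\<forall>D\<in>V. noninc_on D (\<phi> (h D)))"
proof -
  have nonneg_D: "\<forall>m\<in>Mem D. 0 \<le> \<phi> (h D) m" if "D \<in> V" for D
    using nonneg restrict[OF that] by blast
  from mono show ?thesis
  proof (elim disjE)
    assume "\<forall>C\<in>U. mono_on M (\<phi> C)"
    then have "nondec_on D (\<phi> (h D))" if "D \<in> V" for D
      unfolding nondec_on_iff using nonneg_D[OF that] restrict[OF that] monotone_on_subset by blast
    then show ?thesis by blast
  next
    assume "\<forall>C\<in>U. antimono_on M (\<phi> C)"
    then have "noninc_on D (\<phi> (h D))" if "D \<in> V" for D
      unfolding noninc_on_iff using nonneg_D[OF that] restrict[OF that] monotone_on_subset by blast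
    then show ?thesis by blast
  qed
qed

lemma PNA_prod_le_traces_nonempty:
  fixes \<phi> :: "'v set \<Rightarrow> ('v \<Rightarrow> real) \<Rightarrow> real"
  assumes pna: "PNA S q SS" and supp: "set_pmf q \<subseteq> Mem S"
    and part: "is_partition U" and meets: "\<forall>C\<in>U. C \<inter> S \<noteq> {}"
    and cover: "\<Union>U \<inter> S = \<Union>SS" and blocks: "\<forall>C\<in>U. \<exists>F\<subseteq>SS. C \<inter> S = \<Union>F"
    and local: "\<And>C a. C \<in> U \<Longrightarrow> a \<in> Mem S \<Longrightarrow> \<phi> C a = \<phi> C (proj (C \<inter> S) a)"
    and nonneg: "\<And>C a. C \<in> U \<Longrightarrow> a \<in> Mem S \<Longrightarrow> 0 \<le> \<phi> C a"
    and mono: "(\<forall>C\<in>U. mono_on (Mem S) (\<phi> C)) \<or> (\<forall>C\<in>U. antimono_on (Mem S) (\<phi> C))"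
  shows "(\<integral>\<^sup>+a. (\<Prod>C\<in>U. ennreal (\<phi> C a)) \<partial>q) \<le> (\<Prod>C\<in>U. \<integral>\<^sup>+a. ennreal (\<phi> C a) \<partial>q)"
proof -
  let ?tr = "\<lambda>C. C \<inter> S"
  define block where "block = the_inv_into U ?tr"
  have inj: "inj_on ?tr U" using part meets by (rule inj_on_traces)
  have block: "block (C \<inter> S) = C" if "C \<in> U" for C
    unfolding block_def using inj that by (rule the_inv_into_f_f)
  have trace_integral: "(\<integral>\<^sup>+a. ennreal (\<phi> (block D) (proj D a)) \<partial>q) = (\<integral>\<^sup>+a. ennreal (\<phi> C a) \<partial>q)"
    if "C \<in> U" "D = C \<inter> S" for C D
    using that supp local block by (intro nn_integral_cong_AE AE_pmfI) auto
  have "(\<integral>\<^sup>+a. (\<Prod>C\<in>U. ennreal (\<phi> C a)) \<partial>q)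
      = (\<integral>\<^sup>+a. (\<Prod>D\<in>?tr ` U. ennreal (\<phi> (block D) (proj D a))) \<partial>q)"
    using supp local block inj by (intro nn_integral_cong_AE AE_pmfI) (auto simp: prod.reindex)
  also have "\<dots> \<le> (\<Prod>D\<in>?tr ` U. \<integral>\<^sup>+a. ennreal (\<phi> (block D) (proj D a)) \<partial>q)"
  proof (rule PNA_prod_le[OF pna])
    show "coarsens (?tr ` U) SS" using part meets cover blocks by (rule coarsens_traces)
    show "(\<forall>D\<in>?tr ` U. nondec_on D (\<phi> (block D))) \<or> (\<forall>D\<in>?tr ` U. noninc_on D (\<phi> (block D)))"
      using mono nonneg by (rule mono_direction_restrict) (auto simp: block intro: Mem_mono[THEN subsetD])
  qed
  also have "\<dots> = (\<Prod>C\<in>U. \<integral>\<^sup>+a. ennreal (\<phi> C a) \<partial>q)"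
    using inj trace_integral by (simp add: prod.reindex)
  finally show ?thesis .
qed

lemma PNA_prod_le_traces:
  fixes \<phi> :: "'v set \<Rightarrow> ('v \<Rightarrow> real) \<Rightarrow> real"
  assumes pna: "PNA S q SS" and supp: "set_pmf q \<subseteq> Mem S"
    and part: "is_partition U" and fin: "finite U"
    and cover: "\<Union>U \<inter> S = \<Union>SS" and blocks: "\<forall>C\<in>U. \<exists>F\<subseteq>SS. C \<inter> S = \<Union>F"
    and local: "\<And>C a. C \<in> U \<Longrightarrow> a \<in> Mem S \<Longrightarrow> \<phi> C a = \<phi> C (proj (C \<inter> S) a)"
    and nonneg: "\<And>C a. C \<in> U \<Longrightarrow> a \<in> Mem S \<Longrightarrow> 0 \<le> \<phi> C a"
    and mono: "(\<forall>C\<in>U. mono_on (Mem S) (\<phi> C)) \<or> (\<forall>C\<in>U. antimono_on (Mem S) (\<phi> C))"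
  shows "(\<integral>\<^sup>+a. (\<Prod>C\<in>U. ennreal (\<phi> C a)) \<partial>q) \<le> (\<Prod>C\<in>U. \<integral>\<^sup>+a. ennreal (\<phi> C a) \<partial>q)"
proof -
  define U' where "U' = {C\<in>U. C \<inter> S \<noteq> {}}"
  define c where "c = (\<Prod>C\<in>U - U'. ennreal (\<phi> C 0))"
  have split: "(\<Prod>C\<in>U. h C) = (\<Prod>C\<in>U - U'. h C) * (\<Prod>C\<in>U'. h C)" for h :: "'v set \<Rightarrow> ennreal"
    by (rule prod.subset_diff) (auto simp: U'_def fin)
  have const: "\<phi> C a = \<phi> C 0" if "C \<in> U - U'" "a \<in> Mem S" for C a
    using local that unfolding U'_def by auto
  have lhs: "(\<Prod>C\<in>U. ennreal (\<phi> C a)) = c * (\<Prod>C\<in>U'. ennreal (\<phi> C a))" if "a \<in> Mem S" for a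
    unfolding split c_def using const that by (auto intro!: prod.cong)
  have rhs: "(\<Prod>C\<in>U - U'. \<integral>\<^sup>+a. ennreal (\<phi> C a) \<partial>q) = c"
  proof (unfold c_def, intro prod.cong refl)
    fix C assume "C \<in> U - U'"
    then have "(\<integral>\<^sup>+a. ennreal (\<phi> C a) \<partial>q) = (\<integral>\<^sup>+a. ennreal (\<phi> C 0) \<partial>q)"
      using const supp by (intro nn_integral_cong_AE AE_pmfI) auto
    then show "(\<integral>\<^sup>+a. ennreal (\<phi> C a) \<partial>q) = ennreal (\<phi> C 0)"
      by (simp add: measure_pmf.emeasure_space_1)
  qed
  have "(\<integral>\<^sup>+a. (\<Prod>C\<in>U. ennreal (\<phi> C a)) \<partial>q) = c * (\<integral>\<^sup>+a. (\<Prod>C\<in>U'. ennreal (\<phi> C a)) \<partial>q)"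
    using lhs supp by (subst nn_integral_cmult[symmetric]) (auto intro!: nn_integral_cong_AE AE_pmfI)
  also have "\<dots> \<le> c * (\<Prod>C\<in>U'. \<integral>\<^sup>+a. ennreal (\<phi> C a) \<partial>q)"
  proof (intro mult_left_mono PNA_prod_le_traces_nonempty[OF pna supp] zero_le)
    show "is_partition U'" using part unfolding U'_def is_partition_def by blast
    show "\<Union>U' \<inter> S = \<Union>SS" using cover unfolding U'_def by blast
    show "\<forall>C\<in>U'. C \<inter> S \<noteq> {}" and "\<forall>C\<in>U'. \<exists>F\<subseteq>SS. C \<inter> S = \<Union>F"
      using blocks unfolding U'_def by auto
    show "(\<forall>C\<in>U'. mono_on (Mem S) (\<phi> C)) \<or> (\<forall>C\<in>U'. antimono_on (Mem S) (\<phi> C))"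
      using mono unfolding U'_def by auto
    show "\<phi> C a = \<phi> C (proj (C \<inter> S) a)" "0 \<le> \<phi> C a" if "C \<in> U'" "a \<in> Mem S" for C a
      using local nonneg that unfolding U'_def by blast+
  qed
  also have "\<dots> = (\<Prod>C\<in>U. \<integral>\<^sup>+a. ennreal (\<phi> C a) \<partial>q)"
    unfolding split rhs ..
  finally show ?thesis .
qed

lemma add_in_Mem: "a \<in> Mem S \<Longrightarrow> b \<in> Mem T \<Longrightarrow> a + b \<in> Mem (S \<union> T)"
  unfolding Mem_def by auto

lemma proj_add_Mem_disjoint:
  assumes "a \<in> Mem S" and "b \<in> Mem T" and "S \<inter> T = {}"
  shows "proj S (a + b) = a" and "proj T (a + b) = b"
  using assms unfolding proj_def Mem_def by (auto simp: fun_eq_iff)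

lemma proj_add_left: "a \<in> Mem S \<Longrightarrow> proj C (a + b) = proj C (proj (C \<inter> S) a + b)"
  unfolding proj_def Mem_def by auto

lemma proj_add_right: "b \<in> Mem T \<Longrightarrow> proj C (a + b) = proj C (a + proj (C \<inter> T) b)"
  unfolding proj_def Mem_def by auto

lemma monotone_on_proj_comp:
  assumes g: "monotone_on (Mem C) (\<le>) ord g" and h: "mono h"
  shows "monotone_on X (\<le>) ord (\<lambda>x. g (proj C (h x)))"
proof (rule monotone_onI)
  fix x y assume "x \<in> X" "y \<in> X" "x \<le> y"
  then have "proj C (h x) \<le> proj C (h y)" using h by (simp add: proj_mono monoD)
  then show "ord (g (proj C (h x))) (g (proj C (h y)))"
    by (rule monotone_onD[OF g proj_in_Mem proj_in_Mem])
qed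

lemma PNA_prod_le_translated:
  fixes f :: "'v set \<Rightarrow> ('v \<Rightarrow> real) \<Rightarrow> real"
  assumes pna: "PNA T p TT" and supp: "set_pmf p \<subseteq> Mem T"
    and part: "is_partition U" and fin: "finite U"
    and cover: "\<Union>U \<inter> T = \<Union>TT" and blocks: "\<forall>C\<in>U. \<exists>F\<subseteq>TT. C \<inter> T = \<Union>F"
    and nonneg: "\<And>C m. C \<in> U \<Longrightarrow> m \<in> Mem C \<Longrightarrow> 0 \<le> f C m"
    and mono: "(\<forall>C\<in>U. mono_on (Mem C) (f C)) \<or> (\<forall>C\<in>U. antimono_on (Mem C) (f C))"
  shows "(\<integral>\<^sup>+b. (\<Prod>C\<in>U. ennreal (f C (proj C (a + b)))) \<partial>p)
           \<le> (\<Prod>C\<in>U. \<integral>\<^sup>+b. ennreal (f C (proj C (a + b))) \<partial>p)"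
proof (rule PNA_prod_le_traces[OF pna supp part fin cover blocks])
  have "mono ((+) a)" by (simp add: add_left_mono monoI)
  then show "(\<forall>C\<in>U. mono_on (Mem T) (\<lambda>b. f C (proj C (a + b))))
      \<or> (\<forall>C\<in>U. antimono_on (Mem T) (\<lambda>b. f C (proj C (a + b))))"
    using mono monotone_on_proj_comp by blast
  show "f C (proj C (a + b)) = f C (proj C (a + proj (C \<inter> T) b))" if "b \<in> Mem T" for C b
    using proj_add_right[OF that] by simp
  show "0 \<le> f C (proj C (a + b))" if "C \<in> U" for C b
    using nonneg[OF that proj_in_Mem] .
qed

lemma nn_integral_pmf_bounded_less_top:
  fixes p :: "'a pmf"
  assumes "\<And>x. x \<in> set_pmf p \<Longrightarrow> f x \<le> K"
  shows "(\<integral>\<^sup>+x. ennreal (f x) \<partial>p) < top"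
proof -
  have "(\<integral>\<^sup>+x. ennreal (f x) \<partial>p) \<le> (\<integral>\<^sup>+x. ennreal K \<partial>p)"
    using assms by (intro nn_integral_mono_AE AE_pmfI ennreal_leI)
  then show ?thesis
    by (simp add: measure_pmf.emeasure_space_1 order_le_less_trans)
qed

lemma monotone_on_enn2real_nn_integral:
  fixes g :: "'a::ord \<Rightarrow> 'b \<Rightarrow> real" and p :: "'b pmf"
  assumes mono: "\<And>b. monotone_on X (\<le>) ord (\<lambda>a. g a b)"
    and ord: "ord = (\<le>) \<or> ord = (\<lambda>x y. y \<le> x)"
    and bounded: "\<And>a b. g a b \<le> K"
  shows "monotone_on X (\<le>) ord (\<lambda>a. enn2real (\<integral>\<^sup>+b. ennreal (g a b) \<partial>p))"
proof -
  have finite: "(\<integral>\<^sup>+b. ennreal (g a b) \<partial>p) < top" for a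
    using bounded by (rule nn_integral_pmf_bounded_less_top)
  show ?thesis
    using ord mono unfolding monotone_on_def
    by (auto intro!: enn2real_mono finite nn_integral_mono ennreal_leI)
qed

definition indep_pmf :: "('v \<Rightarrow> real) pmf \<Rightarrow> ('v \<Rightarrow> real) pmf \<Rightarrow> ('v \<Rightarrow> real) pmf" where
  "indep_pmf p1 p2 = map_pmf (\<lambda>(a, b). a + b) (pair_pmf p1 p2)"

lemma nn_integral_indep_pmf:
  "(\<integral>\<^sup>+m. h m \<partial>indep_pmf p1 p2) = (\<integral>\<^sup>+a. \<integral>\<^sup>+b. h (a + b) \<partial>p2 \<partial>p1)"
  unfolding indep_pmf_def by (simp add: nn_integral_pair_pmf')

lemma indep_pmf_prod_le_bounded:
  fixes f :: "'v set \<Rightarrow> ('v \<Rightarrow> real) \<Rightarrow> real"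
  assumes pna1: "PNA S p1 SS" and supp1: "set_pmf p1 \<subseteq> Mem S"
    and pna2: "PNA T p2 TT" and supp2: "set_pmf p2 \<subseteq> Mem T"
    and part: "is_partition U" and fin: "finite U"
    and coverS: "\<Union>U \<inter> S = \<Union>SS" and blocksS: "\<forall>C\<in>U. \<exists>F\<subseteq>SS. C \<inter> S = \<Union>F"
    and coverT: "\<Union>U \<inter> T = \<Union>TT" and blocksT: "\<forall>C\<in>U. \<exists>F\<subseteq>TT. C \<inter> T = \<Union>F"
    and nonneg: "\<And>C m. C \<in> U \<Longrightarrow> m \<in> Mem C \<Longrightarrow> 0 \<le> f C m"
    and mono: "(\<forall>C\<in>U. mono_on (Mem C) (f C)) \<or> (\<forall>C\<in>U. antimono_on (Mem C) (f C))"
    and bounded: "\<And>C m. C \<in> U \<Longrightarrow> m \<in> Mem C \<Longrightarrow> f C m \<le> K"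
  shows "(\<integral>\<^sup>+m. (\<Prod>C\<in>U. ennreal (f C (proj C m))) \<partial>indep_pmf p1 p2)
           \<le> (\<Prod>C\<in>U. \<integral>\<^sup>+m. ennreal (f C (proj C m)) \<partial>indep_pmf p1 p2)"
proof -
  define H where "H C a = (\<integral>\<^sup>+b. ennreal (f C (proj C (a + b))) \<partial>p2)" for C a
  define G where "G C a = enn2real (H C a)" for C a
  have H_G: "H C a = ennreal (G C a)" if "C \<in> U" for C a
  proof -
    have "H C a < top"
      unfolding H_def using bounded[OF that proj_in_Mem] by (rule nn_integral_pmf_bounded_less_top)
    then show ?thesis unfolding G_def by simp
  qed
  obtain ord :: "real \<Rightarrow> real \<Rightarrow> bool" where ord: "ord = (\<le>) \<or> ord = (\<lambda>x y. y \<le> x)"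
    and mono_ord: "\<forall>C\<in>U. monotone_on (Mem C) (\<le>) ord (f C)"
    using mono by blast
  have shift_mono: "mono (\<lambda>a. a + b)" for b :: "'v \<Rightarrow> real" by (simp add: add_right_mono monoI)
  have "monotone_on (Mem S) (\<le>) ord (G C)" if C: "C \<in> U" for C
    unfolding G_def H_def
  proof (rule monotone_on_enn2real_nn_integral[OF _ ord])
    show "monotone_on (Mem S) (\<le>) ord (\<lambda>a. f C (proj C (a + b)))" for b
      using mono_ord C by (intro monotone_on_proj_comp[OF _ shift_mono]) blast
    show "f C (proj C (a + b)) \<le> K" for a b
      using bounded[OF C proj_in_Mem] .
  qed
  then have mono_G: "(\<forall>C\<in>U. mono_on (Mem S) (G C)) \<or> (\<forall>C\<in>U. antimono_on (Mem S) (G C))"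
    using ord by blast
  have "(\<integral>\<^sup>+m. (\<Prod>C\<in>U. ennreal (f C (proj C m))) \<partial>indep_pmf p1 p2)
      = (\<integral>\<^sup>+a. \<integral>\<^sup>+b. (\<Prod>C\<in>U. ennreal (f C (proj C (a + b)))) \<partial>p2 \<partial>p1)"
    by (rule nn_integral_indep_pmf)
  also have "\<dots> \<le> (\<integral>\<^sup>+a. (\<Prod>C\<in>U. ennreal (G C a)) \<partial>p1)"
    using PNA_prod_le_translated[OF pna2 supp2 part fin coverT blocksT nonneg mono]
    by (intro nn_integral_mono) (simp add: H_def[symmetric] H_G)
  also have "\<dots> \<le> (\<Prod>C\<in>U. \<integral>\<^sup>+a. ennreal (G C a) \<partial>p1)"
  proof (rule PNA_prod_le_traces[OF pna1 supp1 part fin coverS blocksS _ _ mono_G])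
    show "G C a = G C (proj (C \<inter> S) a)" if "a \<in> Mem S" for C a
      unfolding G_def H_def using proj_add_left[OF that] by simp
  qed (simp add: G_def)
  also have "\<dots> = (\<Prod>C\<in>U. \<integral>\<^sup>+m. ennreal (f C (proj C m)) \<partial>indep_pmf p1 p2)"
    by (simp add: nn_integral_indep_pmf H_def[symmetric] H_G[symmetric])
  finally show ?thesis .
qed

lemma monotone_on_min_const:
  fixes f :: "'a::ord \<Rightarrow> real"
  assumes "monotone_on X (\<le>) ord f" and "ord = (\<le>) \<or> ord = (\<lambda>x y. y \<le> x)"
  shows "monotone_on X (\<le>) ord (\<lambda>x. min (f x) c)"
  using assms unfolding monotone_on_def by (auto intro: min.mono)

lemma nn_integral_prod_le_by_truncation:
  fixes Q :: "'a pmf" and g :: "'b \<Rightarrow> 'a \<Rightarrow> real"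
  assumes fin: "finite U" and nonneg: "\<And>A m. A \<in> U \<Longrightarrow> 0 \<le> g A m"
    and truncated: "\<And>n::nat. (\<integral>\<^sup>+m. (\<Prod>A\<in>U. ennreal (min (g A m) n)) \<partial>Q)
                          \<le> (\<Prod>A\<in>U. \<integral>\<^sup>+m. ennreal (min (g A m) n) \<partial>Q)"
  shows "(\<integral>\<^sup>+m. (\<Prod>A\<in>U. ennreal (g A m)) \<partial>Q) \<le> (\<Prod>A\<in>U. \<integral>\<^sup>+m. ennreal (g A m) \<partial>Q)"
proof -
  let ?P = "\<lambda>n m. \<Prod>A\<in>U. ennreal (min (g A m) (real n))"
  have sup: "(\<Prod>A\<in>U. ennreal (g A m)) = (SUP n. ?P n m)" for m
  proof (rule antisym)
    define N where "N = nat \<lceil>\<Sum>A\<in>U. g A m\<rceil>"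
    have "g A m \<le> real N" if "A \<in> U" for A
    proof -
      have "g A m \<le> (\<Sum>A\<in>U. g A m)" using that fin nonneg by (intro member_le_sum) auto
      also have "\<dots> \<le> real N" unfolding N_def by linarith
      finally show ?thesis .
    qed
    then have "(\<Prod>A\<in>U. ennreal (g A m)) = ?P N m" by (intro prod.cong) auto
    then show "(\<Prod>A\<in>U. ennreal (g A m)) \<le> (SUP n. ?P n m)"
      using SUP_upper[of N UNIV "\<lambda>n. ?P n m"] by simp
    show "(SUP n. ?P n m) \<le> (\<Prod>A\<in>U. ennreal (g A m))"
      by (intro SUP_least prod_mono_ennreal ennreal_leI) simp
  qed
  have "incseq ?P"
    unfolding incseq_def le_fun_def by (auto intro!: prod_mono_ennreal ennreal_leI simp: min_def)
  have "(\<integral>\<^sup>+m. (\<Prod>A\<in>U. ennreal (g A m)) \<partial>Q) = (\<integral>\<^sup>+m. (SUP n. ?P n m) \<partial>Q)"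
    using sup by simp
  also have "\<dots> = (SUP n. \<integral>\<^sup>+m. ?P n m \<partial>Q)"
    using \<open>incseq ?P\<close> by (rule nn_integral_monotone_convergence_SUP) simp
  also have "\<dots> \<le> (\<Prod>A\<in>U. \<integral>\<^sup>+m. ennreal (g A m) \<partial>Q)"
  proof (rule SUP_least)
    fix n :: nat
    have "(\<Prod>A\<in>U. \<integral>\<^sup>+m. ennreal (min (g A m) n) \<partial>Q) \<le> (\<Prod>A\<in>U. \<integral>\<^sup>+m. ennreal (g A m) \<partial>Q)"
      by (intro prod_mono_ennreal nn_integral_mono ennreal_leI) simp
    with truncated show "(\<integral>\<^sup>+m. ?P n m \<partial>Q) \<le> (\<Prod>A\<in>U. \<integral>\<^sup>+m. ennreal (g A m) \<partial>Q)"
      by (rule order_trans)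
  qed
  finally show ?thesis .
qed

lemma is_partition_Un_disjoint:
  assumes SS: "is_partition SS" and TT: "is_partition TT" and disj: "\<Union>SS \<inter> \<Union>TT = {}"
  shows "is_partition (SS \<union> TT)"
  unfolding is_partition_def
proof (intro conjI ballI impI)
  fix A assume "A \<in> SS \<union> TT"
  then show "A \<noteq> {}" using SS TT unfolding is_partition_def by auto
next
  fix A B assume A: "A \<in> SS \<union> TT" and B: "B \<in> SS \<union> TT" and "A \<noteq> B"
  have cross: "X \<inter> Y = {}" if "X \<in> SS" "Y \<in> TT" for X Y
    using disj Union_upper[OF that(1)] Union_upper[OF that(2)] by auto
  from A B consider "A \<in> SS" "B \<in> SS" | "A \<in> SS" "B \<in> TT" | "A \<in> TT" "B \<in> SS" | "A \<in> TT" "B \<in> TT"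
    by blast
  then show "A \<inter> B = {}"
  proof cases
    case 1
    then show ?thesis using SS \<open>A \<noteq> B\<close> unfolding is_partition_def by auto
  next
    case 2
    then show ?thesis by (rule cross)
  next
    case 3
    then show ?thesis using cross[of B A] by auto
  next
    case 4
    then show ?thesis using TT \<open>A \<noteq> B\<close> unfolding is_partition_def by auto
  qed
qed

lemma coarsens_finite:
  assumes "coarsens U V" and "finite (\<Union>V)"
  shows "finite U"
proof -
  have "\<Union>U = \<Union>V" using assms(1) unfolding coarsens_def by simp
  then show ?thesis using assms(2) by (simp add: finite_UnionD)
qed

lemma Union_Int_disjoint_part:
  assumes F: "F \<subseteq> SS \<union> TT" and SS: "\<Union>SS \<subseteq> S" and TT: "\<Union>TT \<inter> S = {}"
  shows "\<Union>F \<inter> S = \<Union>(F \<inter> SS)"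
proof -
  have "\<Union>F = \<Union>(F \<inter> SS) \<union> \<Union>(F \<inter> TT)" using F by blast
  moreover have "\<Union>(F \<inter> TT) \<inter> S = {}" using TT by blast
  moreover have "\<Union>(F \<inter> SS) \<subseteq> S" using SS by blast
  ultimately show ?thesis by blast
qed

lemma coarsens_Un_traces:
  assumes co: "coarsens U (SS \<union> TT)" and SS: "\<Union>SS \<subseteq> S" and TT: "\<Union>TT \<inter> S = {}"
  shows "\<Union>U \<inter> S = \<Union>SS" and "\<forall>C\<in>U. \<exists>F\<subseteq>SS. C \<inter> S = \<Union>F"
proof -
  have "\<Union>U = \<Union>(SS \<union> TT)" using co unfolding coarsens_def by simp
  then have "\<Union>U \<inter> S = \<Union>((SS \<union> TT) \<inter> SS)" using Union_Int_disjoint_part[OF order_refl SS TT] by simp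
  then show "\<Union>U \<inter> S = \<Union>SS" by (simp add: Int_absorb1)
  show "\<forall>C\<in>U. \<exists>F\<subseteq>SS. C \<inter> S = \<Union>F"
  proof
    fix C assume "C \<in> U"
    then have "\<exists>F\<subseteq>SS \<union> TT. C = \<Union>F" using co unfolding coarsens_def by blast
    then obtain F where F: "F \<subseteq> SS \<union> TT" and C: "C = \<Union>F" by blast
    then have "C \<inter> S = \<Union>(F \<inter> SS)" using Union_Int_disjoint_part[OF F SS TT] by simp
    then show "\<exists>F\<subseteq>SS. C \<inter> S = \<Union>F" by blast
  qed
qed

lemma PNA_indep_pmf:
  assumes disj: "S \<inter> T = {}" and "finite S" and "finite T"
    and supp1: "set_pmf p1 \<subseteq> Mem S" and supp2: "set_pmf p2 \<subseteq> Mem T"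
    and pna1: "PNA S p1 SS" and pna2: "PNA T p2 TT"
  shows "PNA (S \<union> T) (indep_pmf p1 p2) (SS \<union> TT)"
proof -
  have SS: "is_partition SS" "\<Union>SS \<subseteq> S" and TT: "is_partition TT" "\<Union>TT \<subseteq> T"
    using pna1 pna2 by (simp_all add: PNA_def)
  show ?thesis
    unfolding PNA_def
  proof (intro conjI allI impI)
    show "is_partition (SS \<union> TT)" using SS TT disj by (intro is_partition_Un_disjoint) auto
    show "\<Union>(SS \<union> TT) \<subseteq> S \<union> T" using SS TT by auto
    fix U f
    assume asm: "coarsens U (SS \<union> TT) \<and> ((\<forall>A\<in>U. nondec_on A (f A)) \<or> (\<forall>A\<in>U. noninc_on A (f A)))"
    then have co: "coarsens U (SS \<union> TT)" by (rule conjunct1)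
    have nonneg: "0 \<le> f A m" if "A \<in> U" "m \<in> Mem A" for A m
      using asm that unfolding nondec_on_def noninc_on_def by auto
    have mono: "(\<forall>A\<in>U. mono_on (Mem A) (f A)) \<or> (\<forall>A\<in>U. antimono_on (Mem A) (f A))"
      using asm unfolding nondec_on_iff noninc_on_iff by auto
    have "finite (\<Union>(SS \<union> TT))"
      by (rule finite_subset[of _ "S \<union> T"]) (use SS TT \<open>finite S\<close> \<open>finite T\<close> in auto)
    with co have fin: "finite U" by (rule coarsens_finite)
    have "\<Union>TT \<inter> S = {}" "\<Union>SS \<inter> T = {}" using SS TT disj by auto
    note tracesS = coarsens_Un_traces[OF co SS(2) this(1)]
      and tracesT = coarsens_Un_traces[OF co[unfolded Un_commute[of SS TT]] TT(2) this(2)]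
    show "(\<integral>\<^sup>+m. (\<Prod>A\<in>U. ennreal (f A (proj A m))) \<partial>indep_pmf p1 p2)
        \<le> (\<Prod>A\<in>U. \<integral>\<^sup>+m. ennreal (f A (proj A m)) \<partial>indep_pmf p1 p2)"
    proof (rule nn_integral_prod_le_by_truncation[OF fin])
      fix n :: nat
      show "(\<integral>\<^sup>+m. (\<Prod>A\<in>U. ennreal (min (f A (proj A m)) n)) \<partial>indep_pmf p1 p2)
          \<le> (\<Prod>A\<in>U. \<integral>\<^sup>+m. ennreal (min (f A (proj A m)) n) \<partial>indep_pmf p1 p2)"
      proof (rule indep_pmf_prod_le_bounded[OF pna1 supp1 pna2 supp2 _ fin tracesS tracesT, where K = n])
        show "is_partition U" using co unfolding coarsens_def by simp
        show "(\<forall>A\<in>U. mono_on (Mem A) (\<lambda>m. min (f A m) n))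
            \<or> (\<forall>A\<in>U. antimono_on (Mem A) (\<lambda>m. min (f A m) n))"
        proof -
          obtain ord :: "real \<Rightarrow> real \<Rightarrow> bool" where ord: "ord = (\<le>) \<or> ord = (\<lambda>x y. y \<le> x)"
            and "\<forall>A\<in>U. monotone_on (Mem A) (\<le>) ord (f A)"
            using mono by blast
          then have "\<forall>A\<in>U. monotone_on (Mem A) (\<le>) ord (\<lambda>m. min (f A m) n)"
            by (blast intro: monotone_on_min_const)
          with ord show ?thesis by blast
        qed
      qed (simp_all add: nonneg)
    qed (simp add: nonneg proj_in_Mem)
  qed
qed

lemma proj_add_proj: "x \<in> Mem (S \<union> T) \<Longrightarrow> S \<inter> T = {} \<Longrightarrow> proj S x + proj T x = x"
  unfolding proj_def Mem_def by (auto simp: fun_eq_iff)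

lemma add_eq_iff_proj:
  assumes "a \<in> Mem S" and "b \<in> Mem T" and disj: "S \<inter> T = {}" and "x \<in> Mem (S \<union> T)"
  shows "a + b = x \<longleftrightarrow> a = proj S x \<and> b = proj T x"
  using proj_add_Mem_disjoint[OF assms(1-3)] proj_add_proj[OF assms(4) disj] by auto

lemma set_indep_pmf:
  "set_pmf p1 \<subseteq> Mem S \<Longrightarrow> set_pmf p2 \<subseteq> Mem T \<Longrightarrow> set_pmf (indep_pmf p1 p2) \<subseteq> Mem (S \<union> T)"
  unfolding indep_pmf_def by (auto simp: set_pair_pmf intro!: add_in_Mem)

lemma pmf_indep_pmf:
  assumes supp1: "set_pmf p1 \<subseteq> Mem S" and supp2: "set_pmf p2 \<subseteq> Mem T"
    and disj: "S \<inter> T = {}" and x: "x \<in> Mem (S \<union> T)"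
  shows "pmf (indep_pmf p1 p2) x = pmf p1 (proj S x) * pmf p2 (proj T x)"
proof -
  let ?P = "pair_pmf p1 p2" and ?M = "Mem S \<times> Mem T"
  have supp: "set_pmf ?P \<subseteq> ?M" using supp1 supp2 by (auto simp: set_pair_pmf)
  have restrict: "measure ?P A = measure ?P (A \<inter> ?M)" for A
  proof -
    have "measure ?P A = measure ?P (A \<inter> set_pmf ?P)" by (rule measure_Int_set_pmf[symmetric])
    also have "A \<inter> set_pmf ?P = (A \<inter> ?M) \<inter> set_pmf ?P" using supp by blast
    also have "measure ?P \<dots> = measure ?P (A \<inter> ?M)" by (rule measure_Int_set_pmf)
    finally show ?thesis .
  qed
  have fiber: "(\<lambda>(a, b). a + b) -` {x} \<inter> ?M = {(proj S x, proj T x)}"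
    using add_eq_iff_proj[OF _ _ disj x] proj_add_proj[OF x disj] proj_in_Mem by auto
  have "pmf (indep_pmf p1 p2) x = measure ?P ((\<lambda>(a, b). a + b) -` {x})"
    unfolding indep_pmf_def pmf_map by simp
  also have "\<dots> = measure ?P {(proj S x, proj T x)}"
    by (subst restrict) (simp only: fiber)
  finally show ?thesis by (simp add: measure_pmf_single pmf_pair)
qed

lemma indep_prod_subset:
  assumes disj: "S \<inter> T = {}" and supp1: "set_pmf p1 \<subseteq> Mem S" and supp2: "set_pmf p2 \<subseteq> Mem T"
  shows "indep_prod (S, p1) (T, p2) \<subseteq> {(S \<union> T, indep_pmf p1 p2)}"
proof
  fix mu assume "mu \<in> indep_prod (S, p1) (T, p2)"
  then obtain p where mu: "mu = (S \<union> T, p)" and supp: "set_pmf p \<subseteq> Mem (S \<union> T)"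
    and pmf_p: "\<forall>x\<in>Mem (S \<union> T). pmf p x = pmf p1 (proj S x) * pmf p2 (proj T x)"
    using disj unfolding indep_prod_def Let_def by auto
  have "p = indep_pmf p1 p2"
  proof (rule pmf_eqI)
    fix x show "pmf p x = pmf (indep_pmf p1 p2) x"
    proof (cases "x \<in> Mem (S \<union> T)")
      case True
      then show ?thesis using pmf_p pmf_indep_pmf[OF supp1 supp2 disj] by simp
    next
      case False
      then have "x \<notin> set_pmf p" "x \<notin> set_pmf (indep_pmf p1 p2)"
        using supp set_indep_pmf[OF supp1 supp2] by auto
      then show ?thesis by (simp add: set_pmf_iff)
    qed
  qed
  then show "mu \<in> {(S \<union> T, indep_pmf p1 p2)}" using mu by simp
qed

lemma indep_pmf_marginals:
  assumes disj: "S \<inter> T = {}" and supp1: "set_pmf p1 \<subseteq> Mem S" and supp2: "set_pmf p2 \<subseteq> Mem T"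
  shows "map_pmf (proj S) (indep_pmf p1 p2) = p1" and "map_pmf (proj T) (indep_pmf p1 p2) = p2"
proof -
  have "map_pmf (proj S) (indep_pmf p1 p2) = map_pmf fst (pair_pmf p1 p2)"
    and "map_pmf (proj T) (indep_pmf p1 p2) = map_pmf snd (pair_pmf p1 p2)"
    unfolding indep_pmf_def map_pmf_comp using supp1 supp2 proj_add_Mem_disjoint[OF _ _ disj]
    by (auto intro!: map_pmf_cong simp: subset_iff)
  then show "map_pmf (proj S) (indep_pmf p1 p2) = p1" and "map_pmf (proj T) (indep_pmf p1 p2) = p2"
    by (simp_all add: map_fst_pair_pmf map_snd_pair_pmf)
qed

theorem mainTheorem8:
  shows "(\<forall>(S::'v set) T p1 p2 SS TT.
            finite S \<and> finite T \<and> S \<inter> T = {} \<and>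
            set_pmf p1 \<subseteq> Mem S \<and> set_pmf p2 \<subseteq> Mem T \<and>
            is_partition SS \<and> \<Union>SS \<subseteq> S \<and> is_partition TT \<and> \<Union>TT \<subseteq> T \<and>
            PNA S p1 SS \<and> PNA T p2 TT \<longrightarrow>
            (\<forall>mu\<in>indep_prod (S, p1) (T, p2). PNA (fst mu) (snd mu) (SS \<union> TT)))
       \<and> (\<forall>mu1\<in>(Xdist :: ('v set \<times> ('v \<Rightarrow> real) pmf) set). \<forall>mu2\<in>Xdist.
            indep_prod mu1 mu2 \<subseteq> oplus mu1 mu2)"
proof (intro conjI allI impI ballI subsetI)
  fix S T :: "'v set" and p1 p2 SS TT mu
  assume "finite S \<and> finite T \<and> S \<inter> T = {} \<and>
            set_pmf p1 \<subseteq> Mem S \<and> set_pmf p2 \<subseteq> Mem T \<and>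
            is_partition SS \<and> \<Union>SS \<subseteq> S \<and> is_partition TT \<and> \<Union>TT \<subseteq> T \<and>
            PNA S p1 SS \<and> PNA T p2 TT"
    and "mu \<in> indep_prod (S, p1) (T, p2)"
  then show "PNA (fst mu) (snd mu) (SS \<union> TT)"
    using indep_prod_subset[of S T p1 p2] PNA_indep_pmf[of S T p1 p2 SS TT] by auto
next
  fix mu1 mu2 mu :: "'v set \<times> ('v \<Rightarrow> real) pmf"
  assume "mu1 \<in> Xdist" "mu2 \<in> Xdist" and mu: "mu \<in> indep_prod mu1 mu2"
  then obtain S p1 T p2 where mu12: "mu1 = (S, p1)" "mu2 = (T, p2)" and "finite S" "finite T"
    and supp1: "set_pmf p1 \<subseteq> Mem S" and supp2: "set_pmf p2 \<subseteq> Mem T"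
    unfolding Xdist_def by auto
  have disj: "S \<inter> T = {}" using mu unfolding mu12 indep_prod_def by (auto split: if_splits)
  have "mu = (S \<union> T, indep_pmf p1 p2)" using indep_prod_subset[OF disj supp1 supp2] mu mu12 by auto
  then show "mu \<in> oplus mu1 mu2"
    unfolding mu12 oplus_def Let_def
    using disj set_indep_pmf[OF supp1 supp2] indep_pmf_marginals[OF disj supp1 supp2]
      PNA_indep_pmf[OF disj \<open>finite S\<close> \<open>finite T\<close> supp1 supp2] by auto
qed

end
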